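(* Let $W$ be an ordered vector space which is monotone complete and which carries a faithful normal positive linear functional $\psi$. Let $J$ be a non-empty, upper bounded, upward directed subset of $W$. Then there exists an increasing sequence $(j_n)_{n\geq 1}$ in $J$ such that $\sup_n j_n = \sup J$ (suprema taken in $W$). Moreover, every increasing sequence $(j_n)_{n\ge 1}$ in $J$ satisfying \[ \sup_{n\geq 1}\psi(j_n) = \sup_{j\in J}\psi(j) \] satisfies $\sup_n j_n = \sup J$.
   Context: An ordered vector space $W$ is called monotone complete if every non-empty upper bounded upward directed subset of $W$ has a supremum in $W$. A positive linear functional $\psi$ on $W$ is called faithful if $\psi(a)>0$ for every $a\in W_+\setminus\{0\}$, where $W_+$ is the set of positive elements of $W$. A positive linear map $\phi$ between monotone complete ordered vector spaces is called normal if $\phi(\sup J)=\sup_{j\in J}\phi(j)$ for every non-empty upper bounded upward directed subset $J$ of the domain. (Example: $W$ the Hermitian part of a $\sigma$-finite von Neumann algebra.) *)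

theory Defs
  imports Complex_Main
begin

definition upper_bound :: "'a::order set \<Rightarrow> 'a \<Rightarrow> bool" where
  "upper_bound J u \<longleftrightarrow> (\<forall>j\<in>J. j \<le> u)"

definition is_sup :: "'a::order set \<Rightarrow> 'a \<Rightarrow> bool" where
  "is_sup J s \<longleftrightarrow> upper_bound J s \<and> (\<forall>u. upper_bound J u \<longrightarrow> s \<le> u)"

definition upper_bounded :: "'a::order set \<Rightarrow> bool" where
  "upper_bounded J \<longleftrightarrow> (\<exists>u. upper_bound J u)"

definition upward_directed :: "'a::order set \<Rightarrow> bool" where
  "upward_directed J \<longleftrightarrow> (\<forall>a\<in>J. \<forall>b\<in>J. \<exists>c\<in>J. a \<le> c \<and> b \<le> c)"

definition monotone_complete :: "'a::ordered_real_vector itself \<Rightarrow> bool" where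
  "monotone_complete _ \<longleftrightarrow>
     (\<forall>J::'a set. J \<noteq> {} \<and> upper_bounded J \<and> upward_directed J \<longrightarrow> (\<exists>s. is_sup J s))"

definition positive_functional :: "('a::ordered_real_vector \<Rightarrow> real) \<Rightarrow> bool" where
  "positive_functional \<psi> \<longleftrightarrow> linear \<psi> \<and> (\<forall>a. 0 \<le> a \<longrightarrow> 0 \<le> \<psi> a)"

definition faithful :: "('a::ordered_real_vector \<Rightarrow> real) \<Rightarrow> bool" where
  "faithful \<psi> \<longleftrightarrow> (\<forall>a. 0 \<le> a \<and> a \<noteq> 0 \<longrightarrow> 0 < \<psi> a)"

definition normal :: "('a::ordered_real_vector \<Rightarrow> real) \<Rightarrow> bool" where
  "normal \<psi> \<longleftrightarrow> (\<forall>J::'a set. \<forall>s. J \<noteq> {} \<and> upper_bounded J \<and> upward_directed J \<and> is_sup J s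
      \<longrightarrow> is_sup (\<psi> ` J) (\<psi> s))"

end

theory Submission
  imports Defs "HOL-Analysis.Analysis"
begin

text \<open>Normality turns the order supremum of J into the supremum of the reals \<psi> ` J, and
faithfulness makes \<psi> strictly monotone. So an increasing sequence in J whose \<psi>-values
exhaust \<open>sup \<psi>(J)\<close> has an order supremum t \<le> sup J with \<psi> t = \<psi>(sup J), which forces
t = sup J. Such a sequence exists because a real supremum is a limit of a sequence of values,
and directedness lets one replace any sequence in J by an increasing sequence dominating it.\<close>

lemma is_sup_imp_cSup_eq:
  fixes A :: "'a::conditionally_complete_lattice set"
  assumes "is_sup A x" "A \<noteq> {}"
  shows "Sup A = x"
  using assms unfolding is_sup_def upper_bound_def
  by (intro cSup_eq_non_empty) auto

lemma upper_bound_subset: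
  assumes "upper_bound B u" "A \<subseteq> B"
  shows "upper_bound A u"
  using assms unfolding upper_bound_def by blast

lemma upward_directed_range_incseq:
  assumes "incseq j"
  shows "upward_directed (range j)"
  unfolding upward_directed_def
proof (intro ballI)
  fix x y
  assume "x \<in> range j" "y \<in> range j"
  then obtain m n where "x = j m" "y = j n"
    by blast
  with assms show "\<exists>c\<in>range j. x \<le> c \<and> y \<le> c"
    by (intro bexI[of _ "j (max m n)"]) (auto simp: incseq_def)
qed

lemma upward_directed_incseq_above:
  fixes a :: "nat \<Rightarrow> 'a::order"
  assumes J: "upward_directed J" and a: "\<And>n. a n \<in> J"
  obtains j where "\<And>n. j n \<in> J" "incseq j" "\<And>n. a n \<le> j n"
proof -
  obtain c where c: "\<And>x y. x \<in> J \<Longrightarrow> y \<in> J \<Longrightarrow> c x y \<in> J \<and> x \<le> c x y \<and> y \<le> c x y"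
    using J unfolding upward_directed_def by metis
  define j where "j = rec_nat (a 0) (\<lambda>n x. c x (a (Suc n)))"
  have j0: "j 0 = a 0" and jSuc: "\<And>n. j (Suc n) = c (j n) (a (Suc n))"
    unfolding j_def by simp_all
  have jJ: "j n \<in> J" for n
    by (induction n) (use a c j0 jSuc in auto)
  show thesis
  proof
    show "j n \<in> J" for n by (fact jJ)
    show "incseq j" by (rule incseq_SucI) (use a c jJ jSuc in auto)
    show "a n \<le> j n" for n by (cases n) (use a c jJ j0 jSuc in auto)
  qed
qed

lemma upward_directed_incseq_SUP_eq:
  fixes f :: "'a::order \<Rightarrow> real"
  assumes "J \<noteq> {}" "upward_directed J" "bdd_above (f ` J)" "mono_on J f"
  obtains j where "\<And>n. j n \<in> J" "incseq j" "(SUP n. f (j n)) = (SUP x\<in>J. f x)"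
proof -
  have "Sup (f ` J) \<in> closure (f ` J)"
    using assms(1,3) by (intro closure_contains_Sup) auto
  then obtain y where y: "\<And>n. y n \<in> f ` J" "y \<longlonglongrightarrow> Sup (f ` J)"
    unfolding closure_sequential by blast
  have "\<forall>n. \<exists>x\<in>J. y n = f x"
    using y(1) by blast
  then obtain a where a: "\<And>n. a n \<in> J" "\<And>n. y n = f (a n)"
    by metis
  obtain j where j: "\<And>n. j n \<in> J" "incseq j" "\<And>n. a n \<le> j n"
    using upward_directed_incseq_above[OF assms(2), of a] a(1) by blast
  have "(SUP n. f (j n)) \<le> (SUP x\<in>J. f x)"
    using assms(3) j(1) by (intro cSUP_mono) auto
  moreover have "(SUP x\<in>J. f x) \<le> (SUP n. f (j n))"
  proof (rule LIMSEQ_le_const2[OF y(2)], intro exI allI impI)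
    fix n
    have "y n \<le> f (j n)"
      using a j assms(4) by (simp add: mono_on_def)
    also have "\<dots> \<le> (SUP n. f (j n))"
      using assms(3) j(1) by (intro cSUP_upper bdd_above_mono[OF assms(3)]) auto
    finally show "y n \<le> (SUP n. f (j n))" .
  qed
  ultimately show thesis
    using that[OF j(1,2)] by (simp add: order.antisym)
qed

lemma positive_functional_mono:
  assumes "positive_functional \<psi>" "a \<le> b"
  shows "\<psi> a \<le> \<psi> b"
proof -
  have "\<psi> (b - a) = \<psi> b - \<psi> a"
    using assms(1) unfolding positive_functional_def by (simp add: linear_diff)
  moreover have "0 \<le> \<psi> (b - a)"
    using assms unfolding positive_functional_def by simp
  ultimately show ?thesis by simp
qed

lemma faithful_eq_imp_eq:
  assumes "positive_functional \<psi>" "faithful \<psi>" "a \<le> b" "\<psi> a = \<psi> b"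
  shows "a = b"
proof -
  have "\<psi> (b - a) = 0"
    using assms(1,4) unfolding positive_functional_def by (simp add: linear_diff)
  moreover have "0 \<le> b - a"
    using assms(3) by simp
  ultimately have "b - a = 0"
    using assms(2) unfolding faithful_def by fastforce
  then show ?thesis
    by simp
qed

lemma normal_SUP_eq:
  assumes "normal \<psi>" "J \<noteq> {}" "upper_bounded J" "upward_directed J" "is_sup J s"
  shows "(SUP x\<in>J. \<psi> x) = \<psi> s"
  using assms unfolding normal_def by (intro is_sup_imp_cSup_eq) auto

lemma is_sup_range_if_SUP_eq:
  fixes \<psi> :: "'a::ordered_real_vector \<Rightarrow> real"
  assumes mc: "monotone_complete TYPE('a)"
    and pos: "positive_functional \<psi>" and fa: "faithful \<psi>" and no: "normal \<psi>"
    and J: "J \<noteq> {}" "upper_bounded J" "upward_directed J"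
    and j: "\<And>n. j n \<in> J" "incseq j"
    and SUP_eq: "(SUP n. \<psi> (j n)) = (SUP x\<in>J. \<psi> x)"
    and s: "is_sup J s"
  shows "is_sup (range j) s"
proof -
  have ub: "upper_bound (range j) s"
    using s j(1) unfolding is_sup_def by (blast intro: upper_bound_subset)
  have dir: "upward_directed (range j)"
    using j(2) by (rule upward_directed_range_incseq)
  obtain t where t: "is_sup (range j) t"
    using mc ub dir unfolding monotone_complete_def upper_bounded_def by blast
  have "t \<le> s"
    using t ub unfolding is_sup_def by blast
  moreover have "\<psi> t = \<psi> s"
  proof -
    have "upper_bounded (range j)"
      using ub unfolding upper_bounded_def by blast
    then show ?thesis
      using normal_SUP_eq[OF no _ _ dir t] normal_SUP_eq[OF no J s] SUP_eq
      by (simp add: image_comp)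
  qed
  ultimately have "t = s"
    by (rule faithful_eq_imp_eq[OF pos fa])
  with t show ?thesis by simp
qed

theorem theorem1:
  fixes \<psi> :: "'a::ordered_real_vector \<Rightarrow> real" and J :: "'a set"
  assumes "monotone_complete TYPE('a)"
    and "positive_functional \<psi>" and "faithful \<psi>" and "normal \<psi>"
    and "J \<noteq> {}" and "upper_bounded J" and "upward_directed J"
  shows "(\<exists>j::nat \<Rightarrow> 'a. (\<forall>n. j n \<in> J) \<and> incseq j \<and>
            (\<forall>s. is_sup J s \<longrightarrow> is_sup (range j) s))
       \<and> (\<forall>j::nat \<Rightarrow> 'a. (\<forall>n. j n \<in> J) \<and> incseq j \<and>
            (SUP n. \<psi> (j n)) = (SUP x\<in>J. \<psi> x)
            \<longrightarrow> (\<forall>s. is_sup J s \<longrightarrow> is_sup (range j) s))"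
proof -
  have maximizing_seq_is_sup: "is_sup (range j) s"
    if "\<forall>n. j n \<in> J" "incseq j" "(SUP n. \<psi> (j n)) = (SUP x\<in>J. \<psi> x)" "is_sup J s" for j s
    using is_sup_range_if_SUP_eq[OF assms] that by blast
  obtain u where "upper_bound J u"
    using assms(6) unfolding upper_bounded_def by blast
  then have "bdd_above (\<psi> ` J)"
    using positive_functional_mono[OF assms(2)] unfolding upper_bound_def
    by (intro bdd_aboveI2) blast
  moreover have "mono_on J \<psi>"
    using positive_functional_mono[OF assms(2)] by (rule mono_onI)
  ultimately obtain j where "\<And>n. j n \<in> J" "incseq j" "(SUP n. \<psi> (j n)) = (SUP x\<in>J. \<psi> x)"
    using upward_directed_incseq_SUP_eq[OF assms(5,7)] by blast
  with maximizing_seq_is_sup show ?thesis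
    by (intro conjI exI[of _ j]) auto
qed

end
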